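(* Let $0\le q\in L_1^{loc}(\mathbb{R})$ and assume there is $a\in(0,\infty)$ with $\inf_{x\in\mathbb{R}}\int_{x-a}^{x+a}q(t)\,dt>0$. For $\lambda\in(0,\infty)$ set $$I_1(x)=\int_x^\infty e^{-\int_x^t(q(\xi)+\lambda)d\xi}dt,\qquad I_2(x)=\int_{-\infty}^x e^{-\int_t^x(q(\xi)+\lambda)d\xi}dt.$$ Then there exist $\delta_1(\lambda)>0$ and $\delta_2(\lambda)>0$ such that $$\sup_{x\in\mathbb{R}}I_1(x)=\frac{1}{\lambda+\delta_1(\lambda)},\qquad\sup_{x\in\mathbb{R}}I_2(x)=\frac{1}{\lambda+\delta_2(\lambda)}.$$ *)

theory Defs
  imports "HOL-Analysis.Analysis"
begin

definition locally_integrable :: "(real \<Rightarrow> real) \<Rightarrow> bool" where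
  "locally_integrable q \<longleftrightarrow> (\<forall>a b. set_integrable lborel {a..b} q)"

definition I1 :: "(real \<Rightarrow> real) \<Rightarrow> real \<Rightarrow> real \<Rightarrow> real" where
  "I1 q l x = (LBINT t:{x..}. exp (- (LBINT \<xi>:{x..t}. (q \<xi> + l))))"

definition I2 :: "(real \<Rightarrow> real) \<Rightarrow> real \<Rightarrow> real \<Rightarrow> real" where
  "I2 q l x = (LBINT t:{..x}. exp (- (LBINT \<xi>:{t..x}. (q \<xi> + l))))"

end

theory Submission
  imports Defs
begin

text \<open>Write the exponent of \<open>I1 x\<close> as \<open>\<integral>\<^sub>x\<^sup>t q + \<lambda> (t - x)\<close>. The integrand is then at most
  \<open>exp (- \<lambda> (t - x))\<close>, and once \<open>t \<ge> x + 2a\<close> the interval \<open>[x, t]\<close> contains a window of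
  length \<open>2a\<close>, so the integrand is at most \<open>exp (- c) exp (- \<lambda> (t - x))\<close>, where \<open>c > 0\<close> is the
  infimum of the window integrals. Integrating gives
  \<open>0 < I1 x \<le> 1/\<lambda> - (1 - exp (- c)) exp (- 2a\<lambda>)/\<lambda>\<close> uniformly in \<open>x\<close>, so the supremum lies
  strictly between \<open>0\<close> and \<open>1/\<lambda>\<close>. The reflection \<open>t \<mapsto> -t\<close> turns \<open>I2\<close> into \<open>I1\<close> for
  \<open>q (- t)\<close>, which satisfies the same hypotheses.\<close>

lemma set_integral_nonneg:
  fixes f :: "'a \<Rightarrow> real"
  assumes "\<And>x. x \<in> A \<Longrightarrow> 0 \<le> f x"
  shows "0 \<le> (LINT x:A|M. f x)"
  unfolding set_lebesgue_integral_def
  using assms by (intro Bochner_Integration.integral_nonneg) (auto simp: indicator_def)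

lemma set_integral_mono_set:
  fixes f :: "'a \<Rightarrow> real"
  assumes "set_integrable M B f" "A \<in> sets M" "A \<subseteq> B" "\<And>x. x \<in> B \<Longrightarrow> 0 \<le> f x"
  shows "(LINT x:A|M. f x) \<le> (LINT x:B|M. f x)"
proof -
  have "set_integrable M A f"
    using set_integrable_subset assms by blast
  then show ?thesis
    using assms unfolding set_lebesgue_integral_def set_integrable_def
    by (intro Bochner_Integration.integral_mono) (auto simp: indicator_def)
qed

lemma set_integral_pos:
  fixes f :: "'a \<Rightarrow> real"
  assumes f: "set_integrable M A f" and A: "A \<in> sets M" "A \<notin> null_sets M"
    and pos: "\<And>x. x \<in> A \<Longrightarrow> 0 < f x"
  shows "0 < (LINT x:A|M. f x)"
proof -
  have "(LINT x:A|M. f x) \<noteq> 0"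
  proof
    assume "(LINT x:A|M. f x) = 0"
    moreover have "(LINT x:A|M. indicator A x * f x) = (LINT x:A|M. f x)"
      unfolding set_lebesgue_integral_def
      by (intro Bochner_Integration.integral_cong) (auto simp: indicator_def)
    moreover have "integrable M (\<lambda>x. indicator A x * f x)"
      using f unfolding set_integrable_def by simp
    ultimately have "A \<in> null_sets M"
      using pos A(1) null_if_pos_func_has_zero_int[of M "\<lambda>x. indicator A x * f x" A] by auto
    with A(2) show False ..
  qed
  moreover have "0 \<le> (LINT x:A|M. f x)"
    using pos by (intro set_integral_nonneg less_imp_le)
  ultimately show ?thesis
    by linarith
qed

lemma set_integrable_reflect:
  fixes f :: "real \<Rightarrow> 'a :: {banach, second_countable_topology}"
  shows "set_integrable lborel {x. - x \<in> S} (\<lambda>x. f (- x)) \<longleftrightarrow> set_integrable lborel S f"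
  unfolding set_integrable_def
  using lborel_integrable_real_affine_iff[where c = "-1" and t = 0
      and f = "\<lambda>x. indicator S x *\<^sub>R f x"]
  by (simp add: indicator_def)

lemma set_integral_exp_decay:
  fixes l s x :: real
  assumes l: "l > 0"
  shows "set_integrable lborel {s..} (\<lambda>t. exp (- l * (t - x)))"
    and "(LBINT t:{s..}. exp (- l * (t - x))) = exp (- l * (s - x)) / l"
proof -
  have "((\<lambda>t. exp (l * x) * exp (- l * t)) has_integral exp (l * x) * (exp (- l * s) / l)) {s..}"
    by (rule has_integral_mult_right[OF has_integral_exp_minus_to_infinity[OF l]])
  moreover have "exp (l * x) * exp (- l * t) = exp (- l * (t - x))" for t
    by (simp add: exp_add[symmetric] algebra_simps)
  ultimately have hi: "((\<lambda>t. exp (- l * (t - x))) has_integral exp (- l * (s - x)) / l) {s..}"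
    by simp
  then have "(\<lambda>t. exp (- l * (t - x))) absolutely_integrable_on {s..}"
    by (intro nonnegative_absolutely_integrable_1) auto
  then show si: "set_integrable lborel {s..} (\<lambda>t. exp (- l * (t - x)))"
    unfolding set_integrable_def by (subst (asm) integrable_completion) auto
  show "(LBINT t:{s..}. exp (- l * (t - x))) = exp (- l * (s - x)) / l"
    using set_borel_integral_eq_integral(2)[OF si] hi by (simp add: integral_unique)
qed

lemma set_integral_reflect_Icc:
  fixes f :: "real \<Rightarrow> real"
  shows "(LBINT t:{u..v}. f t) = (LBINT t:{-v..-u}. f (- t))"
proof -
  have "{t. - t \<in> {u..v}} = {-v..-u}"
    by auto
  then show ?thesis
    using set_integral_reflect[of "{u..v}" f] by simp
qed

lemma set_integral_Ici_exp_dominated: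
  fixes f :: "real \<Rightarrow> real" and l c d x :: real
  assumes l: "l > 0" and d: "d \<ge> 0" and f_meas: "f \<in> borel_measurable borel"
    and f_pos: "\<And>t. x \<le> t \<Longrightarrow> 0 < f t"
    and f_le: "\<And>t. x \<le> t \<Longrightarrow> f t \<le> exp (- l * (t - x))"
    and f_le_far: "\<And>t. x + d \<le> t \<Longrightarrow> f t \<le> exp (- c) * exp (- l * (t - x))"
  shows "0 < (LBINT t:{x..}. f t)"
    and "(LBINT t:{x..}. f t) \<le> 1 / l - (1 - exp (- c)) * exp (- l * d) / l"
proof -
  define e where "e t = exp (- l * (t - x))" for t
  have e_int: "set_integrable lborel {s..} e" for s
    unfolding e_def by (rule set_integral_exp_decay(1)[OF l])
  have e_integral: "(LBINT t:{s..}. e t) = exp (- l * (s - x)) / l" for s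
    unfolding e_def by (rule set_integral_exp_decay(2)[OF l])
  have f_int: "set_integrable lborel {x..} f"
  proof (rule set_integrable_bound[OF e_int])
    show "set_borel_measurable lborel {x..} f"
      using f_meas unfolding set_borel_measurable_def by measurable
    show "AE t in lborel. t \<in> {x..} \<longrightarrow> norm (f t) \<le> norm (e t)"
      using f_pos f_le by (auto intro!: AE_I2 simp: e_def less_imp_le)
  qed
  have "{x..} \<notin> null_sets lborel"
  proof
    assume "{x..} \<in> null_sets lborel"
    then have "{x..x + 1} \<in> null_sets lborel"
      by (rule null_sets_subset) auto
    then show False
      by (simp add: null_sets_def)
  qed
  then show "0 < (LBINT t:{x..}. f t)"
    using f_pos by (intro set_integral_pos[OF f_int]) auto
  have split: "(LBINT t:{x..}. g t) = (LBINT t:{x..<x + d}. g t) + (LBINT t:{x + d..}. g t)"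
    if "set_integrable lborel {x..} g" for g :: "real \<Rightarrow> real"
  proof -
    have "{x..} = {x..<x + d} \<union> {x + d..}"
      using d by auto
    moreover have "set_integrable lborel {x..<x + d} g" "set_integrable lborel {x + d..} g"
      by (rule set_integrable_subset[OF that]; use d in auto)+
    moreover have "{x..<x + d} \<inter> {x + d..} = {}"
      by auto
    ultimately show ?thesis
      using set_integral_Un[of "{x..<x + d}" "{x + d..}" lborel g] by simp
  qed
  have "(LBINT t:{x..<x + d}. f t) \<le> (LBINT t:{x..<x + d}. e t)"
    using f_le by (intro set_integral_mono set_integrable_subset[OF f_int]
        set_integrable_subset[OF e_int]) (auto simp: e_def)
  also have "\<dots> = 1 / l - exp (- l * d) / l"
    using split[OF e_int] e_integral[of x] e_integral[of "x + d"] by simp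
  finally have near: "(LBINT t:{x..<x + d}. f t) \<le> 1 / l - exp (- l * d) / l" .
  have "(LBINT t:{x + d..}. f t) \<le> (LBINT t:{x + d..}. exp (- c) * e t)"
    using f_le_far d by (intro set_integral_mono set_integrable_subset[OF f_int]
        set_integrable_mult_right e_int) (auto simp: e_def)
  also have "\<dots> = exp (- c) * (exp (- l * d) / l)"
    using e_integral[of "x + d"] by (simp add: set_integral_mult_right)
  finally have far: "(LBINT t:{x + d..}. f t) \<le> exp (- c) * (exp (- l * d) / l)" .
  have "(LBINT t:{x..}. f t) \<le> (1 / l - exp (- l * d) / l) + exp (- c) * (exp (- l * d) / l)"
    using split[OF f_int] near far by linarith
  also have "\<dots> = 1 / l - (1 - exp (- c)) * exp (- l * d) / l"
    using l by (simp add: field_simps)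
  finally show "(LBINT t:{x..}. f t) \<le> 1 / l - (1 - exp (- c)) * exp (- l * d) / l" .
qed

lemma locally_integrable_add_const:
  assumes "locally_integrable q"
  shows "locally_integrable (\<lambda>t. q t + l)"
  using assms set_integral_add(1)[OF _ borel_integrable_atLeastAtMost'[OF continuous_on_const]]
  unfolding locally_integrable_def by blast

lemma locally_integrable_reflect:
  assumes "locally_integrable q"
  shows "locally_integrable (\<lambda>t. q (- t))"
  unfolding locally_integrable_def
proof (intro allI)
  fix u v :: real
  have "{t. - t \<in> {-v..-u}} = {u..v}"
    by auto
  then show "set_integrable lborel {u..v} (\<lambda>t. q (- t))"
    using assms set_integrable_reflect[of "{-v..-u}" q] unfolding locally_integrable_def by simp
qed

lemma mono_set_integral_atLeastAtMost:
  fixes g :: "real \<Rightarrow> real"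
  assumes "locally_integrable g" "\<And>t. 0 \<le> g t"
  shows "mono (\<lambda>t. LBINT \<xi>:{x..t}. g \<xi>)"
  using assms unfolding locally_integrable_def
  by (intro monoI set_integral_mono_set) auto

lemma I1_pos_le:
  fixes q :: "real \<Rightarrow> real" and l a c x :: real
  assumes q_nonneg: "\<And>t. 0 \<le> q t" and q_loc: "locally_integrable q"
    and a: "a > 0" and window: "\<And>y. c \<le> (LBINT t:{y - a..y + a}. q t)" and l: "l > 0"
  shows "0 < I1 q l x" and "I1 q l x \<le> 1 / l - (1 - exp (- c)) * exp (- l * (2 * a)) / l"
proof -
  define F where "F t = (LBINT \<xi>:{x..t}. q \<xi> + l)" for t
  have "mono F"
    unfolding F_def using q_nonneg l
    by (intro mono_set_integral_atLeastAtMost locally_integrable_add_const q_loc)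
      (auto intro: add_nonneg_nonneg less_imp_le)
  then have F_meas: "F \<in> borel_measurable borel"
    by (rule borel_measurable_mono)
  have F_eq: "F t = (LBINT \<xi>:{x..t}. q \<xi>) + l * (t - x)" if "x \<le> t" for t
    using q_loc that unfolding F_def locally_integrable_def
    by (simp add: set_integral_add(2) borel_integrable_atLeastAtMost' set_integral_const)
  have Q_nonneg: "0 \<le> (LBINT \<xi>:{x..t}. q \<xi>)" for t
    using q_nonneg by (intro set_integral_nonneg)
  have Q_far: "c \<le> (LBINT \<xi>:{x..t}. q \<xi>)" if "x + 2 * a \<le> t" for t
  proof -
    have "c \<le> (LBINT \<xi>:{(x + a) - a..(x + a) + a}. q \<xi>)"
      by (rule window)
    also have "\<dots> \<le> (LBINT \<xi>:{x..t}. q \<xi>)"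
      using q_loc q_nonneg that unfolding locally_integrable_def
      by (intro set_integral_mono_set) auto
    finally show ?thesis .
  qed
  have I1_eq: "I1 q l x = (LBINT t:{x..}. exp (- F t))"
    unfolding I1_def F_def ..
  have le: "exp (- F t) \<le> exp (- l * (t - x))" if "x \<le> t" for t
    using F_eq[OF that] Q_nonneg[of t] by simp
  have le_far: "exp (- F t) \<le> exp (- c) * exp (- l * (t - x))" if "x + 2 * a \<le> t" for t
    using F_eq[of t] Q_far[OF that] that a by (simp flip: exp_add)
  have "(\<lambda>t. exp (- F t)) \<in> borel_measurable borel"
    using F_meas by measurable
  moreover have "0 \<le> 2 * a"
    using a by simp
  ultimately show "0 < I1 q l x" "I1 q l x \<le> 1 / l - (1 - exp (- c)) * exp (- l * (2 * a)) / l"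
    unfolding I1_eq using set_integral_Ici_exp_dominated[where d = "2 * a", OF l _ _ _ le le_far] by simp_all
qed

lemma I2_eq_I1_reflect: "I2 q l x = I1 (\<lambda>t. q (- t)) l (- x)"
proof -
  have "{t. - t \<in> {..x}} = {-x..}"
    by auto
  then have "I2 q l x = (LBINT t:{-x..}. exp (- (LBINT \<xi>:{-t..x}. q \<xi> + l)))"
    unfolding I2_def using set_integral_reflect[of "{..x}"] by simp
  also have "\<dots> = I1 (\<lambda>t. q (- t)) l (- x)"
    unfolding I1_def by (subst set_integral_reflect_Icc) simp
  finally show ?thesis .
qed

lemma ex_SUP_eq_one_div_add:
  fixes g :: "'a \<Rightarrow> real"
  assumes l: "l > 0" and pos: "\<And>x. 0 < g x" and le: "\<And>x. g x \<le> K" and K: "K < 1 / l"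
  shows "\<exists>\<delta>>0. (SUP x. g x) = 1 / (l + \<delta>)"
proof -
  define S where "S = (SUP x. g x)"
  have "bdd_above (range g)"
    using le by (intro bdd_aboveI2)
  then have "g undefined \<le> S"
    unfolding S_def by (rule cSUP_upper[OF UNIV_I])
  then have S_pos: "0 < S"
    using pos[of undefined] by linarith
  have "S \<le> K"
    unfolding S_def using le by (intro cSUP_least) auto
  with K have "S < 1 / l"
    by linarith
  then have "l < 1 / S"
    using S_pos l by (simp add: field_simps)
  moreover have "S = 1 / (l + (1 / S - l))"
    by simp
  ultimately show ?thesis
    unfolding S_def[symmetric] by (intro exI[of _ "1 / S - l"]) simp
qed

theorem lemma6p1:
  fixes q :: "real \<Rightarrow> real" and l :: real
  assumes q_nonneg: "\<And>x. q x \<ge> 0"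
    and q_loc: "locally_integrable q"
    and a_ex: "\<exists>a>0. (INF x. (LBINT t:{x-a..x+a}. q t)) > 0"
    and lam: "l > 0"
  shows "\<exists>\<delta>1>0. \<exists>\<delta>2>0.
           (SUP x. I1 q l x) = 1 / (l + \<delta>1) \<and>
           (SUP x. I2 q l x) = 1 / (l + \<delta>2)"
proof -
  obtain a where a: "a > 0" and inf_pos: "(INF y. (LBINT t:{y-a..y+a}. q t)) > 0"
    using a_ex by blast
  define c where "c = (INF y. (LBINT t:{y-a..y+a}. q t))"
  have c_pos: "0 < c"
    using inf_pos unfolding c_def .
  have window: "c \<le> (LBINT t:{y - a..y + a}. q t)" for y
    unfolding c_def using q_nonneg
    by (intro cINF_lower bdd_belowI2[where m = 0] set_integral_nonneg) auto
  have window_reflect: "c \<le> (LBINT t:{y - a..y + a}. q (- t))" for y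
    using window[of "- y"] set_integral_reflect_Icc[of "- y - a" "a - y" q] by (simp add: add.commute)
  define K where "K = 1 / l - (1 - exp (- c)) * exp (- l * (2 * a)) / l"
  have "0 < (1 - exp (- c)) * exp (- l * (2 * a)) / l"
    using c_pos lam by (intro divide_pos_pos mult_pos_pos) simp_all
  then have K: "K < 1 / l"
    unfolding K_def by linarith
  have q_reflect_nonneg: "0 \<le> q (- t)" for t
    using q_nonneg .
  have I1_bounds: "0 < I1 q l x" "I1 q l x \<le> K" for x
    unfolding K_def by (rule I1_pos_le[OF q_nonneg q_loc a window lam])+
  have I2_bounds: "0 < I2 q l x" "I2 q l x \<le> K" for x
    unfolding K_def I2_eq_I1_reflect
    by (rule I1_pos_le[OF q_reflect_nonneg locally_integrable_reflect[OF q_loc] a window_reflect lam])+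
  show ?thesis
    using ex_SUP_eq_one_div_add[where g = "I1 q l", OF lam I1_bounds K]
      ex_SUP_eq_one_div_add[where g = "I2 q l", OF lam I2_bounds K]
    by blast
qed

end
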